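(* There exist an abelian uniformizable $T$-module $\mathcal{A}$ and a non-trivial algebraic subvariety of $\mathcal{A}$ which contains infinitely many torsion points of $\mathcal{A}$ but contains no torsion set of $\mathcal{A}$.
   Context: Let $A=\mathbb{F}_q[T]$, $k=\mathbb{F}_q(T)$, $k_\infty$ the completion of $k$ at the infinite place, $\mathcal{C}$ the completion of an algebraic closure of $k_\infty$, and $\tau$ the Frobenius $z\mapsto z^q$. A $T$-module of dimension $m$ defined over $\mathcal{F}\subset\overline{k}$ is $\mathcal{A}=(\mathbb{G}_a^m,\Phi)$ where $\Phi:A\to\mathcal{F}^{m,m}\{\tau\}$ is an $\mathbb{F}_q$-algebra homomorphism with $\Phi(T)=\sum_{i=0}^{\tilde d}a_i\tau^i$, $a_i\in\mathcal{F}^{m,m}$, $a_{\tilde d}\neq0$, and $a_0=TI_m+N$ with $N$ nilpotent; it acts on $\mathbb{G}_a^m$ by $\tau$ acting as the $q$-power map coordinatewise. Torsion points: $\mathcal{A}_{tors}=\{x:\exists a\in A\setminus\{0\},\ \Phi(a)(x)=0\}$. A sub-$T$-module is a reduced connected algebraic subgroup $\mathcal{B}\subseteq\mathbb{G}_a^m$ with $\Phi(T)(\mathcal{B})\subseteq\mathcal{B}$. A torsion set is a subset of the form $x+\mathcal{B}$ with $x\in\mathcal{A}_{tors}$ and $\mathcal{B}$ a sub-$T$-module of $\mathcal{A}$ different from $0$ and from $\mathcal{A}$. $\mathcal{A}$ is abelian if $\mathrm{Hom}_{\mathcal{F}}(\mathcal{A},\mathbb{G}_a)$ (the $\mathbb{F}_q$-linear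 algebraic group homomorphisms, i.e. $\mathcal{F}\{\tau\}^m$), made into an $\mathcal{F}[T]$-module by $T\cdot f=f\circ\Phi(T)$ and $\mathcal{F}$ acting by left multiplication, has finite rank. For abelian $\mathcal{A}$ the exponential is the unique $\mathbb{F}_q$-linear entire map $e:\mathrm{Lie}(\mathcal{A})\cong\mathcal{C}^m\to\mathcal{A}(\mathcal{C})$ with differential the identity at $0$ and $e(d\Phi(T)z)=\Phi(T)(e(z))$; $\mathcal{A}$ is uniformizable if $e$ is surjective. *)

theory Defs
  imports "HOL-Computational_Algebra.Polynomial"
begin

(* The ambient field C.  It is a type 'c (a field) together with a     *)
(* non-archimedean absolute value absC, an element T, and q = p^n with *)
(* CHAR('c) = p.  The assumptions in C_model characterise C as the     *)
(* completion of an algebraic closure of k_infty = F_q((1/T)).          *)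

definition Fq :: "nat \<Rightarrow> 'c::field set" where
  "Fq q = {x. x ^ q = x}"

definition abs_value :: "('c::field \<Rightarrow> real) \<Rightarrow> bool" where
  "abs_value absC \<longleftrightarrow>
     (\<forall>x. absC x \<ge> 0) \<and> (\<forall>x. absC x = 0 \<longleftrightarrow> x = 0) \<and>
     (\<forall>x y. absC (x * y) = absC x * absC y) \<and>
     (\<forall>x y. absC (x + y) \<le> max (absC x) (absC y))"

definition conv :: "('c::field \<Rightarrow> real) \<Rightarrow> (nat \<Rightarrow> 'c) \<Rightarrow> 'c \<Rightarrow> bool" where
  "conv absC s L \<longleftrightarrow> (\<forall>e>0. \<exists>N. \<forall>n\<ge>N. absC (s n - L) < e)"

definition complete_wrt :: "('c::field \<Rightarrow> real) \<Rightarrow> bool" where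
  "complete_wrt absC \<longleftrightarrow>
     (\<forall>s. (\<forall>e>0. \<exists>N. \<forall>i\<ge>N. \<forall>j\<ge>N. absC (s i - s j) < e) \<longrightarrow> (\<exists>L. conv absC s L))"

definition alg_closed_field :: "'c::field itself \<Rightarrow> bool" where
  "alg_closed_field _ \<longleftrightarrow> (\<forall>P :: 'c poly. degree P \<ge> 1 \<longrightarrow> (\<exists>x. poly P x = 0))"

definition algebraic_over :: "'c::field set \<Rightarrow> 'c \<Rightarrow> bool" where
  "algebraic_over K x \<longleftrightarrow> (\<exists>P. P \<noteq> 0 \<and> (\<forall>j. coeff P j \<in> K) \<and> poly P x = 0)"

definition kfield :: "nat \<Rightarrow> 'c::field \<Rightarrow> 'c set" where
  "kfield q T = {poly a T / poly b T | a b.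
      (\<forall>j. coeff a j \<in> Fq q) \<and> (\<forall>j. coeff b j \<in> Fq q) \<and> poly b T \<noteq> 0}"

definition kinf :: "('c::field \<Rightarrow> real) \<Rightarrow> nat \<Rightarrow> 'c \<Rightarrow> 'c set" where
  "kinf absC q T = {x. \<forall>e>0. \<exists>y\<in>kfield q T. absC (x - y) < e}"

definition kbar :: "nat \<Rightarrow> 'c::field \<Rightarrow> 'c set" where
  "kbar q T = {x. algebraic_over (kfield q T) x}"

definition C_model :: "('c::field \<Rightarrow> real) \<Rightarrow> nat \<Rightarrow> 'c \<Rightarrow> bool" where
  "C_model absC q T \<longleftrightarrow>
     abs_value absC \<and> absC T > 1 \<and> complete_wrt absC \<and> alg_closed_field TYPE('c) \<and>
     (\<forall>x e. e > 0 \<longrightarrow> (\<exists>y. algebraic_over (kinf absC q T) y \<and> absC (x - y) < e))"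

(* Vectors and matrices.  Points of G_a^m(C) are functions nat => 'c   *)
(* vanishing at indices >= m; matrices are nat => nat => 'c, only the  *)
(* entries with indices < m matter.                                    *)

definition cvec :: "nat \<Rightarrow> (nat \<Rightarrow> 'c::zero) set" where
  "cvec m = {x. \<forall>i\<ge>m. x i = 0}"

definition mat_vec :: "nat \<Rightarrow> (nat \<Rightarrow> nat \<Rightarrow> 'c::field) \<Rightarrow> (nat \<Rightarrow> 'c) \<Rightarrow> (nat \<Rightarrow> 'c)" where
  "mat_vec m M x = (\<lambda>i. if i < m then (\<Sum>j<m. M i j * x j) else 0)"

definition mat_mult :: "nat \<Rightarrow> (nat \<Rightarrow> nat \<Rightarrow> 'c::field) \<Rightarrow> (nat \<Rightarrow> nat \<Rightarrow> 'c) \<Rightarrow> (nat \<Rightarrow> nat \<Rightarrow> 'c)" where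
  "mat_mult m A B = (\<lambda>i j. if i < m \<and> j < m then (\<Sum>k<m. A i k * B k j) else 0)"

definition mat_id :: "nat \<Rightarrow> (nat \<Rightarrow> nat \<Rightarrow> 'c::field)" where
  "mat_id m = (\<lambda>i j. if i < m \<and> i = j then 1 else 0)"

fun mat_pow :: "nat \<Rightarrow> (nat \<Rightarrow> nat \<Rightarrow> 'c::field) \<Rightarrow> nat \<Rightarrow> (nat \<Rightarrow> nat \<Rightarrow> 'c)" where
  "mat_pow m A 0 = mat_id m"
| "mat_pow m A (Suc r) = mat_mult m A (mat_pow m A r)"

definition nilpotent_mat :: "nat \<Rightarrow> (nat \<Rightarrow> nat \<Rightarrow> 'c::field) \<Rightarrow> bool" where
  "nilpotent_mat m N \<longleftrightarrow> (\<exists>r. \<forall>i<m. \<forall>j<m. mat_pow m N r i j = 0)"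

(* T-modules.  Phi(T) = sum_{l < length as} (as!l) tau^l.              *)

definition twist_apply :: "nat \<Rightarrow> nat \<Rightarrow> (nat \<Rightarrow> nat \<Rightarrow> 'c::field) list \<Rightarrow> (nat \<Rightarrow> 'c) \<Rightarrow> (nat \<Rightarrow> 'c)" where
  "twist_apply m q as x =
     (\<lambda>i. if i < m then (\<Sum>l<length as. \<Sum>j<m. (as ! l) i j * x j ^ (q ^ l)) else 0)"

definition Phi_poly :: "nat \<Rightarrow> nat \<Rightarrow> (nat \<Rightarrow> nat \<Rightarrow> 'c::field) list \<Rightarrow> 'c poly \<Rightarrow> (nat \<Rightarrow> 'c) \<Rightarrow> (nat \<Rightarrow> 'c)" where
  "Phi_poly m q as a x = (\<lambda>i. \<Sum>j\<le>degree a. coeff a j * ((twist_apply m q as ^^ j) x) i)"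

definition is_subfield :: "'c::field set \<Rightarrow> bool" where
  "is_subfield K \<longleftrightarrow> 0 \<in> K \<and> 1 \<in> K \<and> (\<forall>x\<in>K. \<forall>y\<in>K. x + y \<in> K \<and> x - y \<in> K \<and> x * y \<in> K) \<and>
     (\<forall>x\<in>K. inverse x \<in> K)"

definition Tmodule_over :: "nat \<Rightarrow> 'c::field \<Rightarrow> 'c set \<Rightarrow> nat \<Rightarrow> (nat \<Rightarrow> nat \<Rightarrow> 'c) list \<Rightarrow> bool" where
  "Tmodule_over q T K m as \<longleftrightarrow>
     m \<ge> 1 \<and> as \<noteq> [] \<and>
     (\<forall>l<length as. \<forall>i<m. \<forall>j<m. (as ! l) i j \<in> K) \<and>
     (\<exists>i<m. \<exists>j<m. last as i j \<noteq> 0) \<and>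
     nilpotent_mat m (\<lambda>i j. (as ! 0) i j - (if i = j then T else 0))"

definition torsion :: "nat \<Rightarrow> nat \<Rightarrow> (nat \<Rightarrow> nat \<Rightarrow> 'c::field) list \<Rightarrow> (nat \<Rightarrow> 'c) set" where
  "torsion q m as = {x \<in> cvec m. \<exists>a. a \<noteq> 0 \<and> (\<forall>j. coeff a j \<in> Fq q) \<and> Phi_poly m q as a x = (\<lambda>_. 0)}"

text \<open>Hom_K(A, G_a) = K{tau}^m, as functions C^m -> C\<close>
definition hom_Ga :: "nat \<Rightarrow> 'c::field set \<Rightarrow> nat \<Rightarrow> ((nat \<Rightarrow> 'c) \<Rightarrow> 'c) \<Rightarrow> bool" where
  "hom_Ga q K m h \<longleftrightarrow> (\<exists>n b. (\<forall>k i. b k i \<in> K) \<and>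
      h = (\<lambda>x. \<Sum>k<m. \<Sum>i\<le>n. b k i * x k ^ (q ^ i)))"

text \<open>Hom_K(A,G_a) is a finitely generated K[T]-module (T.f = f o Phi(T))\<close>
definition hom_fin_gen :: "nat \<Rightarrow> 'c::field set \<Rightarrow> nat \<Rightarrow> (nat \<Rightarrow> nat \<Rightarrow> 'c) list \<Rightarrow> bool" where
  "hom_fin_gen q K m as \<longleftrightarrow> (\<exists>gs. (\<forall>g\<in>set gs. hom_Ga q K m g) \<and>
      (\<forall>h. hom_Ga q K m h \<longrightarrow> (\<exists>N c. (\<forall>j l. c j l \<in> K) \<and>
          h = (\<lambda>x. \<Sum>j<length gs. \<Sum>l\<le>N. c j l * (gs ! j) ((twist_apply m q as ^^ l) x)))))"

definition abelian_Tmodule :: "nat \<Rightarrow> 'c::field \<Rightarrow> nat \<Rightarrow> (nat \<Rightarrow> nat \<Rightarrow> 'c) list \<Rightarrow> bool" where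
  "abelian_Tmodule q T m as \<longleftrightarrow> (\<exists>K. is_subfield K \<and> K \<subseteq> kbar q T \<and>
      Tmodule_over q T K m as \<and> hom_fin_gen q K m as)"

text \<open>exponential: entire F_q-linear map sum_l E_l z^(q^l), E_0 = I,
  with e(dPhi(T) z) = Phi(T)(e z)\<close>
definition is_exponential :: "('c::field \<Rightarrow> real) \<Rightarrow> nat \<Rightarrow> nat \<Rightarrow> (nat \<Rightarrow> nat \<Rightarrow> 'c) list \<Rightarrow>
    ((nat \<Rightarrow> 'c) \<Rightarrow> (nat \<Rightarrow> 'c)) \<Rightarrow> bool" where
  "is_exponential absC q m as e \<longleftrightarrow> (\<exists>E :: nat \<Rightarrow> nat \<Rightarrow> nat \<Rightarrow> 'c.
      (\<forall>i<m. \<forall>j<m. E 0 i j = (if i = j then 1 else 0)) \<and>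
      (\<forall>z\<in>cvec m. e z \<in> cvec m \<and>
         (\<forall>i<m. conv absC (\<lambda>n. \<Sum>l<n. \<Sum>j<m. E l i j * z j ^ (q ^ l)) (e z i))) \<and>
      (\<forall>z\<in>cvec m. e (mat_vec m (as ! 0) z) = twist_apply m q as (e z)))"

definition uniformizable :: "('c::field \<Rightarrow> real) \<Rightarrow> nat \<Rightarrow> nat \<Rightarrow> (nat \<Rightarrow> nat \<Rightarrow> 'c) list \<Rightarrow> bool" where
  "uniformizable absC q m as \<longleftrightarrow>
     (\<exists>e. is_exponential absC q m as e \<and> e ` cvec m = cvec m)"

definition polyfun :: "nat \<Rightarrow> ((nat \<Rightarrow> 'c::field) \<Rightarrow> 'c) \<Rightarrow> bool" where
  "polyfun m f \<longleftrightarrow> (\<exists>S c. finite S \<and>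
      (\<forall>x. f x = (\<Sum>\<alpha>\<in>S. c \<alpha> * (\<Prod>i<m. x i ^ \<alpha> i))))"

definition zar_closed :: "nat \<Rightarrow> (nat \<Rightarrow> 'c::field) set \<Rightarrow> bool" where
  "zar_closed m Z \<longleftrightarrow> (\<exists>P. (\<forall>f\<in>P. polyfun m f) \<and> Z = {x \<in> cvec m. \<forall>f\<in>P. f x = 0})"

definition zar_irreducible :: "nat \<Rightarrow> (nat \<Rightarrow> 'c::field) set \<Rightarrow> bool" where
  "zar_irreducible m Z \<longleftrightarrow> Z \<noteq> {} \<and>
     (\<forall>Z1 Z2. zar_closed m Z1 \<longrightarrow> zar_closed m Z2 \<longrightarrow> Z \<subseteq> Z1 \<union> Z2 \<longrightarrow> Z \<subseteq> Z1 \<or> Z \<subseteq> Z2)"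

definition zar_connected :: "nat \<Rightarrow> (nat \<Rightarrow> 'c::field) set \<Rightarrow> bool" where
  "zar_connected m Z \<longleftrightarrow> Z \<noteq> {} \<and>
     (\<forall>Z1 Z2. zar_closed m Z1 \<longrightarrow> zar_closed m Z2 \<longrightarrow> Z \<subseteq> Z1 \<union> Z2 \<longrightarrow> Z \<inter> Z1 \<inter> Z2 = {}
        \<longrightarrow> Z \<subseteq> Z1 \<or> Z \<subseteq> Z2)"

definition subvariety :: "nat \<Rightarrow> (nat \<Rightarrow> 'c::field) set \<Rightarrow> bool" where
  "subvariety m X \<longleftrightarrow> zar_closed m X \<and> zar_irreducible m X"

definition sub_Tmodule :: "nat \<Rightarrow> nat \<Rightarrow> (nat \<Rightarrow> nat \<Rightarrow> 'c::field) list \<Rightarrow> (nat \<Rightarrow> 'c) set \<Rightarrow> bool" where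
  "sub_Tmodule q m as B \<longleftrightarrow> zar_closed m B \<and> (\<lambda>_. 0) \<in> B \<and>
     (\<forall>x\<in>B. \<forall>y\<in>B. (\<lambda>i. x i - y i) \<in> B) \<and> zar_connected m B \<and>
     twist_apply m q as ` B \<subseteq> B"

definition translate :: "(nat \<Rightarrow> 'c::field) \<Rightarrow> (nat \<Rightarrow> 'c) set \<Rightarrow> (nat \<Rightarrow> 'c) set" where
  "translate x B = (\<lambda>b i. x i + b i) ` B"

definition torsion_set :: "nat \<Rightarrow> nat \<Rightarrow> (nat \<Rightarrow> nat \<Rightarrow> 'c::field) list \<Rightarrow> (nat \<Rightarrow> 'c) set \<Rightarrow> bool" where
  "torsion_set q m as Y \<longleftrightarrow> (\<exists>x B. x \<in> torsion q m as \<and> sub_Tmodule q m as B \<and>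
      B \<noteq> {(\<lambda>_. 0)} \<and> B \<noteq> cvec m \<and> Y = translate x B)"

end

theory Submission
  imports Defs
begin

text \<open>
  The example is the Carlitz module twisted by a 2x2 Jordan block:
  Phi(T) = [[T, 1], [0, T]] + tau, i.e. Phi(T)(x0, x1) = (C x0 + x1, C x1) with C t = T t + t^q.
  Its exponential is the Carlitz exponential applied in each coordinate; it is surjective
  because C is onto and the Carlitz exponential is an isometry near 0.
  Hom(A, G_a) is generated by the two coordinate projections, since every
  tau-polynomial is a combination of iterates of C.
  The line X = {x0 = 0} contains the infinitely many torsion points (0, v), v a Carlitz
  torsion point. But if x + B lies in X for a sub-T-module B, then every b in B has b0 = 0
  and (Phi(T) b)0 = b1 = 0, so B = 0.
\<close>

section \<open>Non-archimedean absolute values\<close>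

locale nonarch_field =
  fixes absC :: "'c::field \<Rightarrow> real"
  assumes abs_value: "abs_value absC"
begin

lemma absC_nonneg: "absC x \<ge> 0"
  using abs_value by (simp add: abs_value_def)

lemma absC_eq_0_iff: "absC x = 0 \<longleftrightarrow> x = 0"
  using abs_value by (simp add: abs_value_def)

lemma absC_mult: "absC (x * y) = absC x * absC y"
  using abs_value by (simp add: abs_value_def)

lemma absC_add_le_max: "absC (x + y) \<le> max (absC x) (absC y)"
  using abs_value by (simp add: abs_value_def)

lemma absC_0 [simp]: "absC 0 = 0"
  using absC_eq_0_iff by simp

lemma absC_1 [simp]: "absC 1 = 1"
proof -
  have "absC 1 = absC 1 * absC 1" using absC_mult[of 1 1] by simp
  moreover have "absC 1 \<noteq> 0" using absC_eq_0_iff by simp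
  ultimately show ?thesis by simp
qed

lemma absC_minus [simp]: "absC (- x) = absC x"
proof -
  have "absC (- 1) ^ 2 = 1 ^ 2"
    using absC_mult[of "- 1" "- 1"] by (simp add: power2_eq_square)
  then have "absC (- 1) = 1"
    using absC_nonneg[of "- 1"] by (simp add: power2_eq_1_iff)
  then show ?thesis using absC_mult[of "- 1" x] by simp
qed

lemma absC_minus_commute: "absC (x - y) = absC (y - x)"
  using absC_minus[of "x - y"] by simp

lemma absC_power: "absC (x ^ k) = absC x ^ k"
  by (induction k) (auto simp: absC_mult)

lemma absC_divide: "absC (x / y) = absC x / absC y"
proof (cases "y = 0")
  case False
  have "absC (x / y) * absC y = absC x" using absC_mult[of "x / y" y] False by simp
  moreover have "absC y \<noteq> 0" using False absC_eq_0_iff by simp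
  ultimately show ?thesis by (simp add: field_simps)
qed simp

lemma absC_diff_le_max: "absC (x - y) \<le> max (absC x) (absC y)"
  using absC_add_le_max[of x "- y"] by simp

lemma absC_add_eq_right: "absC x < absC y \<Longrightarrow> absC (x + y) = absC y"
  using absC_add_le_max[of x y] absC_diff_le_max[of "x + y" x] by (simp add: max_def split: if_splits)

lemma absC_sum_less:
  "finite A \<Longrightarrow> e > 0 \<Longrightarrow> (\<And>i. i \<in> A \<Longrightarrow> absC (f i) < e) \<Longrightarrow> absC (sum f A) < e"
proof (induction A rule: finite_induct)
  case (insert x F)
  then have "absC (f x) < e" "absC (sum f F) < e" by simp_all
  then show ?case using absC_add_le_max[of "f x" "sum f F"] insert(1,2) by simp
qed simp

lemma absC_sum_le:
  "finite A \<Longrightarrow> B \<ge> 0 \<Longrightarrow> (\<And>i. i \<in> A \<Longrightarrow> absC (f i) \<le> B) \<Longrightarrow> absC (sum f A) \<le> B"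
proof (induction A rule: finite_induct)
  case (insert x F)
  then have "absC (f x) \<le> B" "absC (sum f F) \<le> B" by simp_all
  then show ?case using absC_add_le_max[of "f x" "sum f F"] insert(1,2) by simp
qed simp

lemma conv_unique: "conv absC s L \<Longrightarrow> conv absC s M \<Longrightarrow> L = M"
proof (rule ccontr)
  assume c1: "conv absC s L" and c2: "conv absC s M" and "L \<noteq> M"
  define e where "e = absC (L - M)"
  have e: "e > 0"
    using \<open>L \<noteq> M\<close> absC_eq_0_iff[of "L - M"] absC_nonneg[of "L - M"] by (simp add: e_def)
  obtain N1 where N1: "\<forall>n\<ge>N1. absC (s n - L) < e" using c1 e unfolding conv_def by blast
  obtain N2 where N2: "\<forall>n\<ge>N2. absC (s n - M) < e" using c2 e unfolding conv_def by blast
  define n where "n = max N1 N2"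
  have "absC (L - M) \<le> max (absC (s n - M)) (absC (s n - L))"
    using absC_diff_le_max[of "s n - M" "s n - L"] by (simp add: algebra_simps)
  also have "\<dots> < e" using N1 N2 by (simp add: n_def)
  finally show False by (simp add: e_def)
qed

lemma conv_add:
  assumes "conv absC s L" and "conv absC t M"
  shows "conv absC (\<lambda>n. s n + t n) (L + M)"
  unfolding conv_def
proof (intro allI impI)
  fix e :: real assume "e > 0"
  then obtain N1 N2 where N1: "\<forall>n\<ge>N1. absC (s n - L) < e" and N2: "\<forall>n\<ge>N2. absC (t n - M) < e"
    using assms unfolding conv_def by blast
  have "absC (s n + t n - (L + M)) < e" if "n \<ge> max N1 N2" for n
  proof -
    have "absC (s n + t n - (L + M)) \<le> max (absC (s n - L)) (absC (t n - M))"
      using absC_add_le_max[of "s n - L" "t n - M"] by (simp add: algebra_simps)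
    moreover have "absC (s n - L) < e" "absC (t n - M) < e" using N1 N2 that by auto
    ultimately show ?thesis by simp
  qed
  then show "\<exists>N. \<forall>n\<ge>N. absC (s n + t n - (L + M)) < e" by blast
qed

lemma conv_const: "conv absC (\<lambda>n. c) c"
  unfolding conv_def by simp

lemma conv_mult_left:
  assumes "conv absC s L"
  shows "conv absC (\<lambda>n. c * s n) (c * L)"
proof (cases "c = 0")
  case False
  then have c: "absC c > 0" using absC_eq_0_iff absC_nonneg by (metis less_eq_real_def)
  show ?thesis unfolding conv_def
  proof (intro allI impI)
    fix e :: real assume "e > 0"
    then obtain N where N: "\<forall>n\<ge>N. absC (s n - L) < e / absC c"
      using assms c unfolding conv_def by (meson divide_pos_pos)
    have "absC (c * s n - c * L) < e" if "n \<ge> N" for n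
    proof -
      have "absC (c * s n - c * L) = absC c * absC (s n - L)"
        by (simp add: absC_mult[symmetric] algebra_simps)
      also have "\<dots> < absC c * (e / absC c)" using N that c by (intro mult_strict_left_mono) auto
      finally show ?thesis using c by simp
    qed
    then show "\<exists>N. \<forall>n\<ge>N. absC (c * s n - c * L) < e" by blast
  qed
qed (simp add: conv_const)

lemma conv_Suc: "conv absC s L \<Longrightarrow> conv absC (\<lambda>n. s (Suc n)) L"
  unfolding conv_def using le_SucI by blast

lemma conv_le:
  assumes "conv absC s L" and "\<And>n. absC (s n - c) \<le> B"
  shows "absC (L - c) \<le> B"
proof (rule ccontr)
  assume less: "\<not> absC (L - c) \<le> B"
  then have "absC (L - c) - B > 0" by simp
  then obtain N where N: "absC (s N - L) < absC (L - c) - B"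
    using assms(1) unfolding conv_def by blast
  have "absC (L - c) \<le> max (absC (s N - c)) (absC (s N - L))"
    using absC_diff_le_max[of "s N - c" "s N - L"] by (simp add: algebra_simps)
  also have "\<dots> < absC (L - c)" using assms(2)[of N] N less absC_nonneg[of "s N - c"] by simp
  finally show False by simp
qed

end

locale complete_nonarch_field = nonarch_field +
  assumes complete: "complete_wrt absC"
begin

lemma conv_series:
  assumes "\<forall>e>0. \<exists>N. \<forall>l\<ge>N. absC (f l) < e"
  shows "\<exists>L. conv absC (\<lambda>n. \<Sum>l<n. f l) L"
proof -
  have tail: "absC ((\<Sum>l<v. f l) - (\<Sum>l<u. f l)) < e"
    if "\<forall>l\<ge>N. absC (f l) < e" "e > 0" "N \<le> u" "u \<le> v" for e N u v
  proof -
    have "(\<Sum>l<v. f l) - (\<Sum>l<u. f l) = (\<Sum>l\<in>{u..<v}. f l)"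
      using sum_diff_nat_ivl[of 0 u v f] that by (simp add: atLeast0LessThan)
    also have "absC \<dots> < e" using that by (intro absC_sum_less) auto
    finally show ?thesis .
  qed
  have "\<forall>e>0. \<exists>N. \<forall>i\<ge>N. \<forall>j\<ge>N. absC ((\<Sum>l<i. f l) - (\<Sum>l<j. f l)) < e"
  proof (intro allI impI)
    fix e :: real assume e: "e > 0"
    then obtain N where N: "\<forall>l\<ge>N. absC (f l) < e" using assms by blast
    have "absC ((\<Sum>l<i. f l) - (\<Sum>l<j. f l)) < e" if "i \<ge> N" "j \<ge> N" for i j
      using tail[OF N e, of j i] tail[OF N e, of i j] that absC_minus_commute
      by (cases "j \<le> i") auto
    then show "\<exists>N. \<forall>i\<ge>N. \<forall>j\<ge>N. absC ((\<Sum>l<i. f l) - (\<Sum>l<j. f l)) < e" by blast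
  qed
  then show ?thesis
    using complete[unfolded complete_wrt_def, rule_format, of "\<lambda>n. \<Sum>l<n. f l"] by blast
qed

end

section \<open>A coordinate line in the plane\<close>

definition axis :: "(nat \<Rightarrow> 'c::field) set" where
  "axis = {x \<in> cvec 2. x 0 = 0}"

definition axis_point :: "'c::field \<Rightarrow> nat \<Rightarrow> 'c" where
  "axis_point v = (\<lambda>i. if i = 1 then v else 0)"

lemma axis_point_in_axis: "axis_point v \<in> axis"
  by (simp add: axis_point_def axis_def cvec_def)

lemma axis_eq_axis_point:
  assumes "x \<in> axis"
  shows "x = axis_point (x 1)"
proof
  fix i
  show "x i = axis_point (x 1) i"
    using assms less_2_cases[of i] by (cases "i < 2") (auto simp: axis_def axis_point_def cvec_def)
qed

lemma inj_axis_point: "inj axis_point"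
  by (rule injI) (metis axis_point_def)

lemma axis_neq_cvec: "(axis :: (nat \<Rightarrow> 'c::field) set) \<noteq> cvec 2"
proof
  assume "axis = (cvec 2 :: (nat \<Rightarrow> 'c) set)"
  moreover have "(\<lambda>i. if i = 0 then 1 else 0 :: 'c) \<in> cvec 2" by (simp add: cvec_def)
  ultimately have "(\<lambda>i. if i = 0 then 1 else 0 :: 'c) \<in> axis" by simp
  then show False by (simp add: axis_def)
qed

lemma zar_closed_axis: "zar_closed 2 axis"
proof -
  have "polyfun 2 (\<lambda>x. x 0)"
    unfolding polyfun_def
    by (intro exI[of _ "{\<lambda>i. if i = 0 then 1 else 0}"] exI[of _ "\<lambda>_. 1"])
      (simp add: numeral_2_eq_2 lessThan_Suc)
  moreover have "axis = {x \<in> cvec 2. \<forall>f\<in>{\<lambda>x. x 0}. f x = 0}" by (simp add: axis_def)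
  ultimately show ?thesis unfolding zar_closed_def by blast
qed

lemma polyfun_axis_point: "polyfun 2 f \<Longrightarrow> \<exists>Q. \<forall>v. f (axis_point v) = poly Q v"
proof -
  assume "polyfun 2 f"
  then obtain S c where "\<forall>x. f x = (\<Sum>\<alpha>\<in>S. c \<alpha> * (\<Prod>i<2. x i ^ \<alpha> i))"
    unfolding polyfun_def by blast
  then have "f (axis_point v) = poly (\<Sum>\<alpha>\<in>S. monom (c \<alpha> * 0 ^ (\<alpha> 0)) (\<alpha> 1)) v" for v
    by (simp add: poly_sum poly_monom axis_point_def numeral_2_eq_2 lessThan_Suc mult_ac)
  then show ?thesis by blast
qed

text \<open>Over an infinite field a polynomial vanishing on the whole line is zero.\<close>

lemma zar_irreducible_axis:
  assumes "infinite (UNIV :: 'c::field set)"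
  shows "zar_irreducible 2 (axis :: (nat \<Rightarrow> 'c) set)"
  unfolding zar_irreducible_def
proof (intro conjI allI impI)
  show "axis \<noteq> {}" using axis_point_in_axis by blast
next
  fix Z1 Z2 :: "(nat \<Rightarrow> 'c) set"
  assume "zar_closed 2 Z1" "zar_closed 2 Z2" and cover: "axis \<subseteq> Z1 \<union> Z2"
  then obtain P1 P2 where P1: "\<forall>f\<in>P1. polyfun 2 f" "Z1 = {x \<in> cvec 2. \<forall>f\<in>P1. f x = 0}"
    and P2: "\<forall>f\<in>P2. polyfun 2 f" "Z2 = {x \<in> cvec 2. \<forall>f\<in>P2. f x = 0}"
    unfolding zar_closed_def by blast
  show "axis \<subseteq> Z1 \<or> axis \<subseteq> Z2"
  proof (rule ccontr)
    assume "\<not> (axis \<subseteq> Z1 \<or> axis \<subseteq> Z2)"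
    then obtain x1 x2 f1 f2 where x1: "x1 \<in> axis" "f1 \<in> P1" "f1 x1 \<noteq> 0"
      and x2: "x2 \<in> axis" "f2 \<in> P2" "f2 x2 \<noteq> 0"
      using P1(2) P2(2) by (auto simp: axis_def)
    obtain Q1 Q2 where Q1: "\<forall>v. f1 (axis_point v) = poly Q1 v" and Q2: "\<forall>v. f2 (axis_point v) = poly Q2 v"
      using polyfun_axis_point P1(1) P2(1) x1(2) x2(2) by meson
    have "Q1 \<noteq> 0" using x1 Q1 axis_eq_axis_point[OF x1(1)] by (metis poly_0)
    moreover have "Q2 \<noteq> 0" using x2 Q2 axis_eq_axis_point[OF x2(1)] by (metis poly_0)
    ultimately have finite_roots: "finite {v. poly (Q1 * Q2) v = 0}" by (intro poly_roots_finite) simp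
    moreover have "poly (Q1 * Q2) v = 0" for v
    proof -
      have "axis_point v \<in> Z1 \<union> Z2" using cover axis_point_in_axis by blast
      then have "f1 (axis_point v) = 0 \<or> f2 (axis_point v) = 0" using P1(2) P2(2) x1(2) x2(2) by auto
      then show ?thesis using Q1 Q2 by auto
    qed
    then have "{v. poly (Q1 * Q2) v = 0} = UNIV" by blast
    then show False using finite_roots assms by metis
  qed
qed

section \<open>The Carlitz module\<close>

definition carlitz :: "'c::field \<Rightarrow> nat \<Rightarrow> 'c \<Rightarrow> 'c" where
  "carlitz T q t = T * t + t ^ q"

text \<open>The coefficients of the q-polynomial \<open>carlitz T q ^^ l\<close>, see \<open>carlitz_iter_expand\<close>.\<close>

primrec carlitz_iter_coeff :: "'c::field \<Rightarrow> nat \<Rightarrow> nat \<Rightarrow> nat \<Rightarrow> 'c" where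
  "carlitz_iter_coeff T q 0 i = (if i = 0 then 1 else 0)"
| "carlitz_iter_coeff T q (Suc l) i =
     T * carlitz_iter_coeff T q l i + (if i = 0 then 0 else carlitz_iter_coeff T q l (i - 1) ^ q)"

text \<open>The coefficients 1 / D_l of the Carlitz exponential, where D_l = (T^(q^l) - T) * D_(l-1)^q.\<close>

primrec carlitz_exp_coeff :: "'c::field \<Rightarrow> nat \<Rightarrow> nat \<Rightarrow> 'c" where
  "carlitz_exp_coeff T q 0 = 1"
| "carlitz_exp_coeff T q (Suc l) = carlitz_exp_coeff T q l ^ q / (T ^ (q ^ Suc l) - T)"

definition jordan_carlitz :: "'c::field \<Rightarrow> (nat \<Rightarrow> nat \<Rightarrow> 'c) list" where
  "jordan_carlitz T =
     [\<lambda>i j. if i = j then T else if i = 0 \<and> j = 1 then 1 else 0, \<lambda>i j. if i = j then 1 else 0]"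

locale carlitz_setting =
  fixes absC :: "'c::field \<Rightarrow> real" and T :: 'c and p n q :: nat
  assumes prime_p: "prime p" and char_p: "CHAR('c) = p" and n_pos: "n \<ge> 1" and q_def: "q = p ^ n"
    and C_model: "C_model absC q T"
begin

sublocale complete_nonarch_field absC
  using C_model by unfold_locales (simp_all add: C_model_def)

lemma absC_T_gt_1: "absC T > 1"
  using C_model by (simp add: C_model_def)

lemma alg_closed: "alg_closed_field TYPE('c)"
  using C_model by (simp add: C_model_def)

lemma T_nonzero: "T \<noteq> 0"
  using absC_T_gt_1 absC_eq_0_iff by force

lemma q_ge_2: "q \<ge> 2"
proof -
  have "p \<ge> 2" using prime_p prime_ge_2_nat by blast
  then have "p ^ 1 \<le> p ^ n" using n_pos by (intro power_increasing) auto
  then show ?thesis using q_def \<open>p \<ge> 2\<close> by simp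
qed

lemma q_pos: "q > 0"
  using q_ge_2 by simp

lemma frobenius_power_add: "(x + y) ^ (q ^ l) = x ^ (q ^ l) + (y::'c) ^ (q ^ l)"
  using freshmans_dream'[where m = "q ^ l" and n = "n * l" and x = x and y = y] prime_p char_p q_def
  by (simp add: power_mult)

lemma frobenius_power_sum: "(\<Sum>i\<in>A. f i) ^ (q ^ l) = (\<Sum>i\<in>A. (f i :: 'c) ^ (q ^ l))"
  using freshmans_dream_sum'[where m = "q ^ l" and n = "n * l" and f = f and A = A] prime_p char_p q_def
  by (simp add: power_mult)

lemma frobenius_add: "(x + y) ^ q = x ^ q + (y::'c) ^ q"
  using frobenius_power_add[of x y 1] by simp

lemma frobenius_sum: "(\<Sum>i\<in>A. f i) ^ q = (\<Sum>i\<in>A. (f i :: 'c) ^ q)"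
  using frobenius_power_sum[of f A 1] by simp

lemma frobenius_minus: "(- x) ^ q = - ((x::'c) ^ q)"
  using frobenius_add[of x "- x"] q_pos by (simp add: power_0_left eq_neg_iff_add_eq_0 add.commute)

lemma frobenius_diff: "(x - y) ^ q = x ^ q - (y::'c) ^ q"
  using frobenius_add[of x "- y"] frobenius_minus[of y] by simp

lemma frobenius_of_nat: "(of_nat k :: 'c) ^ q = of_nat k"
  by (induction k) (auto simp: frobenius_add q_pos)

lemma Fq_add: "x \<in> Fq q \<Longrightarrow> y \<in> Fq q \<Longrightarrow> x + (y::'c) \<in> Fq q"
  by (simp add: Fq_def frobenius_add)

lemma Fq_mult: "x \<in> Fq q \<Longrightarrow> y \<in> Fq q \<Longrightarrow> x * (y::'c) \<in> Fq q"
  by (simp add: Fq_def power_mult_distrib)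

lemma Fq_minus: "x \<in> Fq q \<Longrightarrow> - (x::'c) \<in> Fq q"
  by (simp add: Fq_def frobenius_minus)

lemma Fq_0: "(0::'c) \<in> Fq q" and Fq_1: "(1::'c) \<in> Fq q"
  by (simp_all add: Fq_def q_pos)

lemma Fq_sum: "(\<And>i. i \<in> A \<Longrightarrow> f i \<in> Fq q) \<Longrightarrow> (\<Sum>i\<in>A. f i :: 'c) \<in> Fq q"
  by (induction A rule: infinite_finite_induct) (auto simp: Fq_0 Fq_add)

definition Fq_polys :: "'c poly set" where
  "Fq_polys = {a. \<forall>j. coeff a j \<in> Fq q}"

lemma Fq_polys_add: "a \<in> Fq_polys \<Longrightarrow> b \<in> Fq_polys \<Longrightarrow> a + b \<in> Fq_polys"
  by (simp add: Fq_polys_def Fq_add)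

lemma Fq_polys_minus: "a \<in> Fq_polys \<Longrightarrow> - a \<in> Fq_polys"
  by (simp add: Fq_polys_def Fq_minus)

lemma Fq_polys_mult: "a \<in> Fq_polys \<Longrightarrow> b \<in> Fq_polys \<Longrightarrow> a * b \<in> Fq_polys"
  by (simp add: Fq_polys_def coeff_mult Fq_sum Fq_mult)

lemma Fq_polys_monom: "c \<in> Fq q \<Longrightarrow> monom c k \<in> Fq_polys"
  by (simp add: Fq_polys_def coeff_monom Fq_0)

abbreviation K :: "'c set" where
  "K \<equiv> kfield q T"

lemma kfieldI: "a \<in> Fq_polys \<Longrightarrow> b \<in> Fq_polys \<Longrightarrow> poly b T \<noteq> 0 \<Longrightarrow> poly a T / poly b T \<in> K"
  unfolding kfield_def Fq_polys_def by blast

lemma kfieldE: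
  assumes "x \<in> K"
  obtains a b where "a \<in> Fq_polys" "b \<in> Fq_polys" "poly b T \<noteq> 0" "x = poly a T / poly b T"
  using assms unfolding kfield_def Fq_polys_def by blast

lemma kfield_poly: "a \<in> Fq_polys \<Longrightarrow> poly a T \<in> K"
  using kfieldI[of a 1] Fq_polys_monom[OF Fq_1, of 0] by (simp add: one_pCons)

lemma kfield_0: "0 \<in> K" and kfield_1: "1 \<in> K" and kfield_T: "T \<in> K"
  using kfield_poly[OF Fq_polys_monom[OF Fq_0, of 0]] kfield_poly[OF Fq_polys_monom[OF Fq_1, of 0]]
    kfield_poly[OF Fq_polys_monom[OF Fq_1, of 1]]
  by (simp_all add: poly_monom)

lemma kfield_add:
  assumes "x \<in> K" "y \<in> K"
  shows "x + y \<in> K"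
proof -
  obtain a b c d where ab: "a \<in> Fq_polys" "b \<in> Fq_polys" "poly b T \<noteq> 0" "x = poly a T / poly b T"
    and cd: "c \<in> Fq_polys" "d \<in> Fq_polys" "poly d T \<noteq> 0" "y = poly c T / poly d T"
    using assms by (elim kfieldE)
  have "poly (a * d + c * b) T / poly (b * d) T \<in> K"
    using ab cd by (intro kfieldI) (simp_all add: Fq_polys_add Fq_polys_mult)
  then show ?thesis
    using ab cd by (simp add: add_frac_eq)
qed

lemma kfield_mult:
  assumes "x \<in> K" "y \<in> K"
  shows "x * y \<in> K"
proof -
  obtain a b c d where ab: "a \<in> Fq_polys" "b \<in> Fq_polys" "poly b T \<noteq> 0" "x = poly a T / poly b T"
    and cd: "c \<in> Fq_polys" "d \<in> Fq_polys" "poly d T \<noteq> 0" "y = poly c T / poly d T"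
    using assms by (elim kfieldE)
  have "poly (a * c) T / poly (b * d) T \<in> K"
    using ab cd by (intro kfieldI) (simp_all add: Fq_polys_mult)
  then show ?thesis
    using ab cd by simp
qed

lemma kfield_minus:
  assumes "x \<in> K"
  shows "- x \<in> K"
proof -
  obtain a b where "a \<in> Fq_polys" "b \<in> Fq_polys" "poly b T \<noteq> 0" "x = poly a T / poly b T"
    using assms by (elim kfieldE)
  moreover have "poly (- a) T / poly b T \<in> K"
    using calculation by (intro kfieldI) (simp_all add: Fq_polys_minus)
  ultimately show ?thesis by simp
qed

lemma kfield_diff: "x \<in> K \<Longrightarrow> y \<in> K \<Longrightarrow> x - y \<in> K"
  using kfield_add kfield_minus by (metis diff_conv_add_uminus)

lemma kfield_inverse:
  assumes "x \<in> K"
  shows "inverse x \<in> K"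
proof -
  obtain a b where ab: "a \<in> Fq_polys" "b \<in> Fq_polys" "poly b T \<noteq> 0" "x = poly a T / poly b T"
    using assms by (elim kfieldE)
  show ?thesis
  proof (cases "poly a T = 0")
    case False
    then show ?thesis using ab kfieldI[of b a] by simp
  qed (simp add: ab kfield_0)
qed

lemma kfield_power: "x \<in> K \<Longrightarrow> x ^ k \<in> K"
  by (induction k) (auto simp: kfield_1 kfield_mult)

lemma kfield_of_nat: "(of_nat k :: 'c) \<in> K"
  by (induction k) (auto simp: kfield_0 kfield_1 kfield_add)

lemma kfield_sum: "(\<And>i. i \<in> A \<Longrightarrow> f i \<in> K) \<Longrightarrow> (\<Sum>i\<in>A. f i) \<in> K"
  by (induction A rule: infinite_finite_induct) (auto simp: kfield_0 kfield_add)

lemma is_subfield_kfield: "is_subfield K"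
  unfolding is_subfield_def by (simp add: kfield_0 kfield_1 kfield_add kfield_diff kfield_mult kfield_inverse)

lemma kfield_subset_kbar: "K \<subseteq> kbar q T"
proof
  fix x assume x: "x \<in> K"
  have "\<forall>j. coeff [:- x, 1:] j \<in> K"
    using x kfield_minus kfield_0 kfield_1 by (auto simp: coeff_pCons split: nat.split)
  moreover have "poly [:- x, 1:] x = 0" by simp
  moreover have "[:- x, 1:] \<noteq> 0" by simp
  ultimately show "x \<in> kbar q T"
    unfolding kbar_def algebraic_over_def by blast
qed

abbreviation \<phi> :: "'c \<Rightarrow> 'c" where
  "\<phi> \<equiv> carlitz T q"

abbreviation \<Phi> :: "(nat \<Rightarrow> 'c) \<Rightarrow> nat \<Rightarrow> 'c" where
  "\<Phi> \<equiv> twist_apply 2 q (jordan_carlitz T)"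

lemma twist_apply_jordan_carlitz:
  "\<Phi> x 0 = \<phi> (x 0) + x 1" "\<Phi> x (Suc 0) = \<phi> (x 1)" "i \<ge> 2 \<Longrightarrow> \<Phi> x i = 0"
  by (auto simp: twist_apply_def jordan_carlitz_def numeral_2_eq_2 lessThan_Suc carlitz_def)

lemma carlitz_add: "\<phi> (x + y) = \<phi> x + \<phi> y"
  by (simp add: carlitz_def frobenius_add algebra_simps)

lemma carlitz_0 [simp]: "\<phi> 0 = 0"
  by (simp add: carlitz_def q_pos)

lemma carlitz_iter_0 [simp]: "(\<phi> ^^ l) 0 = 0"
  by (induction l) auto

lemma carlitz_of_nat_mult: "\<phi> (of_nat k * x) = of_nat k * \<phi> x"
  by (simp add: carlitz_def power_mult_distrib frobenius_of_nat algebra_simps)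

lemma twist_iter_jordan_carlitz:
  "(\<Phi> ^^ l) x 0 = (\<phi> ^^ l) (x 0) + of_nat l * (\<phi> ^^ (l - 1)) (x 1)"
  "(\<Phi> ^^ l) x (Suc 0) = (\<phi> ^^ l) (x 1)"
proof (induction l)
  case (Suc l)
  have "\<phi> ((\<phi> ^^ (l - 1)) (x 1)) = (\<phi> ^^ l) (x 1)" if "l > 0"
    using that by (cases l) auto
  then show "(\<Phi> ^^ Suc l) x 0 = (\<phi> ^^ Suc l) (x 0) + of_nat (Suc l) * (\<phi> ^^ (Suc l - 1)) (x 1)"
    using Suc.IH by (cases "l = 0") (auto simp: twist_apply_jordan_carlitz carlitz_add carlitz_of_nat_mult algebra_simps)
  show "(\<Phi> ^^ Suc l) x (Suc 0) = (\<phi> ^^ Suc l) (x 1)"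
    using Suc.IH by (simp add: twist_apply_jordan_carlitz)
qed simp_all

lemma carlitz_iter_coeff_eq_0: "l < i \<Longrightarrow> carlitz_iter_coeff T q l i = 0"
  by (induction l arbitrary: i) (auto simp: q_pos)

lemma carlitz_iter_coeff_diag: "carlitz_iter_coeff T q l l = 1"
  by (induction l) (auto simp: carlitz_iter_coeff_eq_0)

lemma carlitz_iter_coeff_in_kfield: "carlitz_iter_coeff T q l i \<in> K"
  by (induction l arbitrary: i) (auto simp: kfield_0 kfield_1 kfield_T kfield_add kfield_mult kfield_power)

lemma carlitz_iter_expand:
  "l \<le> N \<Longrightarrow> (\<phi> ^^ l) t = (\<Sum>i\<le>N. carlitz_iter_coeff T q l i * t ^ (q ^ i))"
proof (induction l arbitrary: N)
  case 0
  have "(\<Sum>i\<le>N. carlitz_iter_coeff T q 0 i * t ^ (q ^ i)) = (\<Sum>i\<in>{0}. carlitz_iter_coeff T q 0 i * t ^ (q ^ i))"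
    by (rule sum.mono_neutral_right) auto
  then show ?case by simp
next
  case (Suc l)
  then obtain M where M: "N = Suc M" by (cases N) auto
  have IH: "(\<phi> ^^ l) t = (\<Sum>i\<le>N. carlitz_iter_coeff T q l i * t ^ (q ^ i))" using Suc by simp
  have "(\<phi> ^^ Suc l) t = T * (\<phi> ^^ l) t + ((\<phi> ^^ l) t) ^ q" by (simp add: carlitz_def)
  also have "((\<phi> ^^ l) t) ^ q = (\<Sum>i\<le>N. (carlitz_iter_coeff T q l i) ^ q * t ^ (q ^ Suc i))"
    unfolding IH by (simp add: frobenius_sum power_mult_distrib power_mult[symmetric] mult.commute)
  also have "\<dots> = (\<Sum>i\<le>M. (carlitz_iter_coeff T q l i) ^ q * t ^ (q ^ Suc i))"
    using Suc.prems M by (simp add: carlitz_iter_coeff_eq_0 q_pos)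
  also have "\<dots> = (\<Sum>i\<le>N. (if i = 0 then 0 else (carlitz_iter_coeff T q l (i - 1)) ^ q) * t ^ (q ^ i))"
    unfolding M by (subst sum.atMost_Suc_shift) simp
  finally show ?case unfolding IH
    by (simp add: sum_distrib_left sum.distrib[symmetric] algebra_simps)
qed

text \<open>By induction on \<open>N\<close>, since \<open>\<phi> ^^ N\<close> has leading coefficient 1 in degree q^N
  (\<open>carlitz_iter_coeff_diag\<close>).\<close>

lemma q_polynomial_carlitz_span:
  assumes "\<And>i. b i \<in> K"
  shows "\<exists>c. (\<forall>l. c l \<in> K) \<and> (\<forall>t. (\<Sum>i\<le>N. b i * t ^ (q ^ i)) = (\<Sum>l\<le>N. c l * (\<phi> ^^ l) t))"
  using assms
proof (induction N arbitrary: b)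
  case (Suc N)
  define \<beta> where "\<beta> = b (Suc N)"
  define b' where "b' i = b i - \<beta> * carlitz_iter_coeff T q (Suc N) i" for i
  have "\<And>i. b' i \<in> K"
    using Suc.prems
    by (simp add: b'_def \<beta>_def kfield_diff kfield_mult carlitz_iter_coeff_in_kfield
        del: carlitz_iter_coeff.simps)
  then obtain c' where c': "\<forall>l. c' l \<in> K" "\<forall>t. (\<Sum>i\<le>N. b' i * t ^ (q ^ i)) = (\<Sum>l\<le>N. c' l * (\<phi> ^^ l) t)"
    using Suc.IH by blast
  define c where "c l = (if l = Suc N then \<beta> else c' l)" for l
  have "(\<Sum>i\<le>Suc N. b i * t ^ (q ^ i)) = (\<Sum>l\<le>Suc N. c l * (\<phi> ^^ l) t)" for t
  proof -
    have "\<beta> * (\<phi> ^^ Suc N) t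
        = (\<Sum>i\<le>N. \<beta> * carlitz_iter_coeff T q (Suc N) i * t ^ (q ^ i)) + \<beta> * t ^ (q ^ Suc N)"
      by (simp add: carlitz_iter_expand[of "Suc N" "Suc N"] sum_distrib_left distrib_left
          carlitz_iter_coeff_diag mult.assoc del: carlitz_iter_coeff.simps funpow.simps)
    then have "(\<Sum>i\<le>Suc N. b i * t ^ (q ^ i)) = (\<Sum>i\<le>N. b' i * t ^ (q ^ i)) + \<beta> * (\<phi> ^^ Suc N) t"
      by (simp add: b'_def \<beta>_def algebra_simps sum_subtractf del: funpow.simps)
    also have "\<dots> = (\<Sum>l\<le>Suc N. c l * (\<phi> ^^ l) t)"
      using c' by (simp add: c_def del: funpow.simps)
    finally show ?thesis .
  qed
  moreover have "\<forall>l. c l \<in> K" using c' Suc.prems by (simp add: c_def \<beta>_def)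
  ultimately show ?case by blast
next
  case 0
  then show ?case by (intro exI[of _ b]) simp
qed

lemma sum_of_nat_carlitz_iter_expand:
  "(\<Sum>l\<le>N. c l * (of_nat l * (\<phi> ^^ (l - 1)) t))
     = (\<Sum>i\<le>N. (\<Sum>l\<le>N. c l * of_nat l * carlitz_iter_coeff T q (l - 1) i) * t ^ (q ^ i))"
proof -
  have "(\<Sum>l\<le>N. c l * (of_nat l * (\<phi> ^^ (l - 1)) t))
      = (\<Sum>l\<le>N. \<Sum>i\<le>N. c l * of_nat l * carlitz_iter_coeff T q (l - 1) i * t ^ (q ^ i))"
    by (intro sum.cong refl)
      (simp add: carlitz_iter_expand[of _ N] sum_distrib_left mult.assoc del: funpow.simps)
  also have "\<dots> = (\<Sum>i\<le>N. \<Sum>l\<le>N. c l * of_nat l * carlitz_iter_coeff T q (l - 1) i * t ^ (q ^ i))"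
    by (rule sum.swap)
  finally show ?thesis by (simp add: sum_distrib_right)
qed

lemma hom_Ga_coordinate:
  assumes "k < m"
  shows "hom_Ga q K m (\<lambda>x. x k)"
proof -
  define b :: "nat \<Rightarrow> nat \<Rightarrow> 'c" where "b k' i = of_bool (k' = k)" for k' i
  have "{..<m} \<inter> {k'. k' = k} = {k}" using assms by auto
  then have "(\<lambda>x. x k) = (\<lambda>x. \<Sum>k'<m. \<Sum>i\<le>0. b k' i * x k' ^ (q ^ i))"
    by (simp add: b_def)
  moreover have "\<forall>k' i. b k' i \<in> K" by (simp add: b_def kfield_0 kfield_1)
  ultimately show ?thesis unfolding hom_Ga_def by blast
qed

lemma hom_fin_gen_jordan_carlitz: "hom_fin_gen q K 2 (jordan_carlitz T)"
  unfolding hom_fin_gen_def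
proof (intro exI[of _ "[\<lambda>x. x 0, \<lambda>x. x 1]"] conjI allI impI)
  let ?gs = "[\<lambda>x. x 0, \<lambda>x. x 1] :: ((nat \<Rightarrow> 'c) \<Rightarrow> 'c) list"
  show "\<forall>g\<in>set ?gs. hom_Ga q K 2 g" by (simp add: hom_Ga_coordinate)
next
  let ?gs = "[\<lambda>x. x 0, \<lambda>x. x 1] :: ((nat \<Rightarrow> 'c) \<Rightarrow> 'c) list"
  fix h assume "hom_Ga q K 2 h"
  then obtain N b where b: "\<forall>k i. b k i \<in> K" and h: "h = (\<lambda>x. \<Sum>k<2. \<Sum>i\<le>N. b k i * x k ^ (q ^ i))"
    unfolding hom_Ga_def by blast
  obtain c0 where c0: "\<forall>l. c0 l \<in> K" "\<forall>t. (\<Sum>i\<le>N. b 0 i * t ^ (q ^ i)) = (\<Sum>l\<le>N. c0 l * (\<phi> ^^ l) t)"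
    using q_polynomial_carlitz_span[of "b 0" N] b by blast
  define b1 where "b1 i = b 1 i - (\<Sum>l\<le>N. c0 l * of_nat l * carlitz_iter_coeff T q (l - 1) i)" for i
  have "\<And>i. b1 i \<in> K"
    using b c0 by (auto simp: b1_def intro!: kfield_diff kfield_sum kfield_mult kfield_of_nat carlitz_iter_coeff_in_kfield)
  then obtain c1 where c1: "\<forall>l. c1 l \<in> K" "\<forall>t. (\<Sum>i\<le>N. b1 i * t ^ (q ^ i)) = (\<Sum>l\<le>N. c1 l * (\<phi> ^^ l) t)"
    using q_polynomial_carlitz_span by blast
  define c where "c j l = (if j = 0 then c0 l else c1 l)" for j :: nat and l
  have sum_2: "(\<Sum>j<length ?gs. F j) = F 0 + F 1" for F :: "nat \<Rightarrow> 'c"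
    by (simp add: numeral_2_eq_2)
  have "h x = (\<Sum>j<length ?gs. \<Sum>l\<le>N. c j l * (?gs ! j) ((\<Phi> ^^ l) x))" for x
  proof -
    have "(\<Sum>j<length ?gs. \<Sum>l\<le>N. c j l * (?gs ! j) ((\<Phi> ^^ l) x))
        = (\<Sum>l\<le>N. c0 l * (\<phi> ^^ l) (x 0)) + (\<Sum>l\<le>N. c0 l * (of_nat l * (\<phi> ^^ (l - 1)) (x 1)))
          + (\<Sum>l\<le>N. c1 l * (\<phi> ^^ l) (x 1))"
      unfolding sum_2 by (simp add: c_def twist_iter_jordan_carlitz distrib_left sum.distrib
          del: funpow.simps)
    also have "\<dots> = (\<Sum>i\<le>N. b 0 i * x 0 ^ (q ^ i)) + (\<Sum>i\<le>N. b 1 i * x 1 ^ (q ^ i))"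
      unfolding sum_of_nat_carlitz_iter_expand c0(2)[rule_format, symmetric] c1(2)[rule_format, symmetric]
      by (simp add: b1_def algebra_simps sum_subtractf sum.distrib[symmetric])
    also have "\<dots> = h x" by (simp add: h numeral_2_eq_2)
    finally show ?thesis by simp
  qed
  moreover have "\<forall>j l. c j l \<in> K" using c0 c1 by (simp add: c_def)
  ultimately show "\<exists>N c. (\<forall>j l. c j l \<in> K) \<and>
      h = (\<lambda>x. \<Sum>j<length ?gs. \<Sum>l\<le>N. c j l * (?gs ! j) ((\<Phi> ^^ l) x))"
    by blast
qed

subsection \<open>The Carlitz exponential\<close>

lemma conv_frobenius: "conv absC s L \<Longrightarrow> conv absC (\<lambda>n. s n ^ q) (L ^ q)"
  unfolding conv_def
proof (intro allI impI)
  fix e :: real assume "\<forall>e>0. \<exists>N. \<forall>n\<ge>N. absC (s n - L) < e" and "e > 0"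
  then obtain N where N: "\<forall>n\<ge>N. absC (s n - L) < min e 1" by (metis min_less_iff_conj zero_less_one)
  have "absC (s n ^ q - L ^ q) < e" if "n \<ge> N" for n
  proof -
    have small: "absC (s n - L) < min e 1" using N that by blast
    have "absC (s n ^ q - L ^ q) = absC (s n - L) ^ q" by (simp add: frobenius_diff[symmetric] absC_power)
    also have "\<dots> \<le> absC (s n - L) ^ 1" using small absC_nonneg q_pos by (intro power_decreasing) auto
    finally show ?thesis using small by simp
  qed
  then show "\<exists>N. \<forall>n\<ge>N. absC (s n ^ q - L ^ q) < e" by blast
qed

lemma q_power_ge: "l \<le> q ^ l"
proof -
  have "l < 2 ^ l" by simp
  also have "(2::nat) ^ l \<le> q ^ l" using q_ge_2 by (intro power_mono) auto
  finally show ?thesis by simp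
qed

lemma absC_T_power_mono: "i \<le> j \<Longrightarrow> absC T ^ i \<le> absC T ^ j"
  using absC_T_gt_1 by (intro power_increasing) auto

lemma absC_T_power_pos: "absC T ^ i > 0"
  using absC_T_gt_1 by simp

lemma divide_absC_T_power_vanish: "c \<ge> 0 \<Longrightarrow> e > 0 \<Longrightarrow> \<exists>N. \<forall>k\<ge>N. c / absC T ^ k < e"
proof -
  assume c: "c \<ge> 0" and e: "e > 0"
  obtain N where N: "c / e < absC T ^ N" using real_arch_pow[OF absC_T_gt_1] by blast
  have "c / absC T ^ k < e" if "k \<ge> N" for k
  proof -
    have "c / absC T ^ k \<le> c / absC T ^ N"
      using c absC_T_power_pos absC_T_power_mono[OF that] by (intro divide_left_mono) auto
    also have "\<dots> < e" using N e absC_T_power_pos[of N] by (simp add: field_simps)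
    finally show ?thesis .
  qed
  then show ?thesis by blast
qed

lemma absC_T_qpower_minus_T: "absC (T ^ (q ^ Suc l) - T) = absC T ^ (q ^ Suc l)"
proof -
  have "1 < q ^ Suc l" using q_ge_2 by (intro one_less_power) auto
  then have "absC T ^ 1 < absC T ^ (q ^ Suc l)" using absC_T_gt_1 by (intro power_strict_increasing) auto
  then have "absC (- T) < absC (T ^ (q ^ Suc l))" by (simp add: absC_power)
  then have "absC (- T + T ^ (q ^ Suc l)) = absC (T ^ (q ^ Suc l))" by (rule absC_add_eq_right)
  then show ?thesis by (simp add: absC_power)
qed

lemma T_qpower_neq_T: "T ^ (q ^ Suc l) - T \<noteq> 0"
  using absC_T_qpower_minus_T[of l] absC_T_power_pos[of "q ^ Suc l"] by (metis absC_0 less_irrefl)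

lemma absC_carlitz_exp_coeff: "absC (carlitz_exp_coeff T q l) = inverse (absC T ^ (l * q ^ l))"
proof (induction l)
  case (Suc l)
  have exponent: "Suc l * q ^ Suc l = l * q ^ l * q + q ^ Suc l" by (simp add: algebra_simps)
  have "absC T ^ (Suc l * q ^ Suc l) = (absC T ^ (l * q ^ l)) ^ q * absC T ^ (q ^ Suc l)"
    unfolding exponent by (simp add: power_add power_mult)
  moreover have "absC (carlitz_exp_coeff T q (Suc l)) = (inverse (absC T ^ (l * q ^ l))) ^ q / absC T ^ (q ^ Suc l)"
    using Suc by (simp add: absC_divide absC_power absC_T_qpower_minus_T[simplified])
  ultimately show ?case by (simp add: field_simps power_inverse)
qed simp

lemma carlitz_exp_coeff_rec:
  "carlitz_exp_coeff T q (Suc l) * T ^ (q ^ Suc l) = T * carlitz_exp_coeff T q (Suc l) + carlitz_exp_coeff T q l ^ q"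
proof -
  have "carlitz_exp_coeff T q (Suc l) * (T ^ (q ^ Suc l) - T) = carlitz_exp_coeff T q l ^ q"
    using T_qpower_neq_T[of l] by (simp del: power_Suc)
  then show ?thesis by (simp add: algebra_simps del: carlitz_exp_coeff.simps power_Suc)
qed

lemma absC_carlitz_exp_term:
  "absC (carlitz_exp_coeff T q l * z ^ (q ^ l)) = (absC z / absC T ^ l) ^ (q ^ l)"
  by (simp add: absC_mult absC_carlitz_exp_coeff absC_power power_divide power_mult[symmetric]
      field_simps mult.commute)

lemma carlitz_exp_term_vanish: "\<forall>e>0. \<exists>N. \<forall>l\<ge>N. absC (carlitz_exp_coeff T q l * z ^ (q ^ l)) < e"
proof (intro allI impI)
  fix e :: real assume e: "e > 0"
  obtain N1 where N1: "2 * absC z < absC T ^ N1" using real_arch_pow[OF absC_T_gt_1] by blast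
  obtain N2 where N2: "1 / e < 2 ^ N2" using real_arch_pow[of 2 "1/e"] by auto
  have "absC (carlitz_exp_coeff T q l * z ^ (q ^ l)) < e" if l: "l \<ge> max N1 N2" for l
  proof -
    have "absC T ^ N1 \<le> absC T ^ l" using l by (intro absC_T_power_mono) simp
    then have "absC z / absC T ^ l \<le> 1 / 2" using N1 absC_T_power_pos[of l] by (simp add: field_simps)
    then have "(absC z / absC T ^ l) ^ (q ^ l) \<le> (1/2) ^ (q ^ l)"
      using absC_nonneg absC_T_power_pos by (intro power_mono) auto
    also have "\<dots> \<le> (1/2) ^ l" using q_power_ge by (intro power_decreasing) auto
    also have "\<dots> \<le> (1/2) ^ N2" using l by (intro power_decreasing) auto
    also have "\<dots> < e" using N2 e by (simp add: field_simps power_one_over)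
    finally show ?thesis by (simp add: absC_carlitz_exp_term)
  qed
  then show "\<exists>N. \<forall>l\<ge>N. absC (carlitz_exp_coeff T q l * z ^ (q ^ l)) < e" by blast
qed

definition carlitz_exp_partial :: "'c \<Rightarrow> nat \<Rightarrow> 'c" where
  "carlitz_exp_partial z k = (\<Sum>l<k. carlitz_exp_coeff T q l * z ^ (q ^ l))"

definition carlitz_exp :: "'c \<Rightarrow> 'c" where
  "carlitz_exp z = (THE L. conv absC (carlitz_exp_partial z) L)"

lemma conv_carlitz_exp: "conv absC (carlitz_exp_partial z) (carlitz_exp z)"
proof -
  obtain L where L: "conv absC (carlitz_exp_partial z) L"
    using conv_series[OF carlitz_exp_term_vanish[of z]] unfolding carlitz_exp_partial_def by blast
  show ?thesis
    unfolding carlitz_exp_def by (rule theI[of _ L]) (use L conv_unique in blast)+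
qed

lemma carlitz_exp_eqI: "conv absC (carlitz_exp_partial z) L \<Longrightarrow> carlitz_exp z = L"
  using conv_carlitz_exp conv_unique by blast

lemma carlitz_exp_add: "carlitz_exp (z + w) = carlitz_exp z + carlitz_exp w"
proof (rule carlitz_exp_eqI)
  have "carlitz_exp_partial (z + w) n = carlitz_exp_partial z n + carlitz_exp_partial w n" for n
    by (simp add: carlitz_exp_partial_def frobenius_power_add distrib_left sum.distrib)
  then show "conv absC (carlitz_exp_partial (z + w)) (carlitz_exp z + carlitz_exp w)"
    using conv_add[OF conv_carlitz_exp[of z] conv_carlitz_exp[of w]] by presburger
qed

lemma carlitz_exp_diff: "carlitz_exp (z - w) = carlitz_exp z - carlitz_exp w"
  using carlitz_exp_add[of "z - w" w] by simp

lemma carlitz_exp_partial_functional_eq: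
  "carlitz_exp_partial (T * z) (Suc k) = T * carlitz_exp_partial z (Suc k) + (carlitz_exp_partial z k) ^ q"
proof (induction k)
  case (Suc k)
  let ?c = "carlitz_exp_coeff T q"
  have "carlitz_exp_partial (T * z) (Suc (Suc k))
      = carlitz_exp_partial (T * z) (Suc k) + ?c (Suc k) * T ^ (q ^ Suc k) * z ^ (q ^ Suc k)"
    by (simp add: carlitz_exp_partial_def power_mult_distrib mult.assoc del: carlitz_exp_coeff.simps power_Suc)
  moreover have "carlitz_exp_partial z (Suc (Suc k)) = carlitz_exp_partial z (Suc k) + ?c (Suc k) * z ^ (q ^ Suc k)"
    by (simp add: carlitz_exp_partial_def del: carlitz_exp_coeff.simps power_Suc)
  moreover have "(carlitz_exp_partial z (Suc k)) ^ q = (carlitz_exp_partial z k) ^ q + ?c k ^ q * z ^ (q ^ Suc k)"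
    by (simp add: carlitz_exp_partial_def frobenius_add power_mult_distrib power_mult[symmetric] mult.commute)
  ultimately show ?case
    unfolding Suc carlitz_exp_coeff_rec by (simp add: algebra_simps)
qed (simp add: carlitz_exp_partial_def q_pos)

lemma carlitz_exp_functional_eq: "carlitz_exp (T * z) = \<phi> (carlitz_exp z)"
proof -
  have "conv absC (\<lambda>n. T * carlitz_exp_partial z (Suc n) + (carlitz_exp_partial z n) ^ q)
      (T * carlitz_exp z + (carlitz_exp z) ^ q)"
    by (intro conv_add conv_mult_left conv_frobenius conv_Suc conv_carlitz_exp)
  then have "conv absC (\<lambda>n. carlitz_exp_partial (T * z) (Suc n)) (\<phi> (carlitz_exp z))"
    by (simp add: carlitz_exp_partial_functional_eq carlitz_def)
  then show ?thesis
    using conv_unique[OF conv_Suc[OF conv_carlitz_exp]] by blast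
qed

lemma absC_carlitz_exp_tail_term:
  assumes "absC w \<le> absC T"
  shows "absC (carlitz_exp_coeff T q (Suc l) * w ^ (q ^ Suc l)) \<le> absC w / absC T"
proof -
  define t where "t = absC w / absC T"
  have t: "0 \<le> t" "t \<le> 1" using absC_nonneg assms absC_T_gt_1 by (simp_all add: t_def)
  have "absC w / absC T ^ Suc l \<le> t"
    unfolding t_def using absC_nonneg absC_T_power_mono[of 1 "Suc l"] absC_T_gt_1
    by (intro divide_left_mono) auto
  then have "absC (carlitz_exp_coeff T q (Suc l) * w ^ (q ^ Suc l)) \<le> t ^ (q ^ Suc l)"
    unfolding absC_carlitz_exp_term using absC_nonneg absC_T_power_pos by (intro power_mono) auto
  also have "\<dots> \<le> t ^ 1" using t q_pos by (intro power_decreasing) auto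
  finally show ?thesis by (simp add: t_def)
qed

lemma absC_carlitz_exp_minus_id:
  assumes "absC w \<le> absC T"
  shows "absC (carlitz_exp w - w) \<le> absC w / absC T"
proof (rule conv_le[OF conv_Suc[OF conv_carlitz_exp]])
  fix n
  have "carlitz_exp_partial w (Suc n) - w = (\<Sum>l<n. carlitz_exp_coeff T q (Suc l) * w ^ (q ^ Suc l))"
    unfolding carlitz_exp_partial_def
    by (subst sum.lessThan_Suc_shift) (simp del: carlitz_exp_coeff.simps(2) power_Suc)
  also have "absC \<dots> \<le> absC w / absC T"
    using absC_carlitz_exp_tail_term[OF assms] absC_nonneg absC_T_gt_1 by (intro absC_sum_le) auto
  finally show "absC (carlitz_exp_partial w (Suc n) - w) \<le> absC w / absC T" .
qed

lemma absC_carlitz_exp_le: "absC w \<le> absC T \<Longrightarrow> absC (carlitz_exp w) \<le> absC w"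
proof -
  assume w: "absC w \<le> absC T"
  have "absC w / absC T \<le> absC w / 1"
    using absC_T_gt_1 absC_nonneg[of w] by (intro divide_left_mono) auto
  then have "absC (carlitz_exp w - w) \<le> absC w" using absC_carlitz_exp_minus_id[OF w] by simp
  then show ?thesis using absC_add_le_max[of "carlitz_exp w - w" w] by simp
qed

lemma conv_carlitz_exp_compose:
  assumes "conv absC s z"
  shows "conv absC (\<lambda>k. carlitz_exp (s k)) (carlitz_exp z)"
  unfolding conv_def
proof (intro allI impI)
  fix e :: real assume "e > 0"
  then obtain N where N: "\<forall>k\<ge>N. absC (s k - z) < min e (absC T)"
    using assms absC_T_gt_1 unfolding conv_def by (meson min_less_iff_conj zero_less_one less_trans)
  have "absC (carlitz_exp (s k) - carlitz_exp z) < e" if "k \<ge> N" for k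
  proof -
    have small: "absC (s k - z) < min e (absC T)" using N that by blast
    then have "absC (carlitz_exp (s k - z)) \<le> absC (s k - z)" by (intro absC_carlitz_exp_le) simp
    then show ?thesis using small by (simp add: carlitz_exp_diff)
  qed
  then show "\<exists>N. \<forall>k\<ge>N. absC (carlitz_exp (s k) - carlitz_exp z) < e" by blast
qed

lemma absC_carlitz_exp_defect_iter:
  assumes y: "absC y \<le> absC T"
  shows "absC (((\<lambda>d. d - carlitz_exp d) ^^ k) y) \<le> absC y / absC T ^ k"
proof (induction k)
  case (Suc k)
  let ?d = "((\<lambda>d. d - carlitz_exp d) ^^ k) y"
  have "absC y / absC T ^ k \<le> absC y / 1"
    using absC_nonneg[of y] one_le_power[of "absC T" k] absC_T_gt_1 by (intro divide_left_mono) auto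
  then have "absC ?d \<le> absC T" using Suc y by simp
  then have "absC (?d - carlitz_exp ?d) \<le> absC ?d / absC T"
    using absC_carlitz_exp_minus_id[of ?d] by (simp add: absC_minus_commute)
  also have "\<dots> \<le> (absC y / absC T ^ k) / absC T"
    using Suc absC_T_gt_1 by (intro divide_right_mono) auto
  finally show ?case by (simp add: field_simps)
qed simp

lemma carlitz_exp_onto_disc:
  assumes y: "absC y \<le> absC T"
  shows "\<exists>z. carlitz_exp z = y"
proof -
  define d where "d k = ((\<lambda>d. d - carlitz_exp d) ^^ Suc k) y" for k
  define zs where "zs k = y + (\<Sum>i<k. d i)" for k
  have defect: "y - carlitz_exp (zs k) = d k" for k
  proof (induction k)
    case (Suc k)
    have "y - carlitz_exp (zs (Suc k)) = (y - carlitz_exp (zs k)) - carlitz_exp (d k)"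
      by (simp add: zs_def carlitz_exp_add algebra_simps)
    then show ?case using Suc.IH by (simp add: d_def)
  qed (simp add: zs_def d_def)
  have d_vanish: "\<forall>e>0. \<exists>N. \<forall>i\<ge>N. absC (d i) < e"
  proof (intro allI impI)
    fix e :: real assume "e > 0"
    then obtain N where "\<forall>k\<ge>N. absC y / absC T ^ k < e"
      using divide_absC_T_power_vanish[OF absC_nonneg] by blast
    then show "\<exists>N. \<forall>i\<ge>N. absC (d i) < e"
      using absC_carlitz_exp_defect_iter[OF y] unfolding d_def by (meson le_SucI le_less_trans)
  qed
  then obtain L where "conv absC (\<lambda>k. \<Sum>i<k. d i) L" using conv_series by blast
  then have "conv absC zs (y + L)" unfolding zs_def by (rule conv_add[OF conv_const])
  then have "conv absC (\<lambda>k. carlitz_exp (zs k)) (carlitz_exp (y + L))"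
    by (rule conv_carlitz_exp_compose)
  moreover have "conv absC (\<lambda>k. carlitz_exp (zs k)) y"
    using d_vanish defect by (simp add: conv_def absC_minus_commute)
  ultimately show ?thesis using conv_unique by blast
qed

lemma carlitz_surj: "\<exists>x. \<phi> x = w"
proof -
  define P where "P = monom (1::'c) q + [:- w, T:]"
  have "degree [:- w, T:] < degree (monom (1::'c) q)"
    using q_ge_2 by (simp add: degree_monom_eq)
  then have "degree P = q" unfolding P_def by (simp add: degree_add_eq_left degree_monom_eq)
  then obtain x where "poly P x = 0" using alg_closed q_ge_2 unfolding alg_closed_field_def by force
  then have "\<phi> x = w" by (simp add: P_def poly_monom carlitz_def algebra_simps)
  then show ?thesis by blast
qed

lemma absC_carlitz_large:
  assumes "absC x > absC T"
  shows "absC (\<phi> x) = absC x ^ q"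
proof -
  have "absC (T * x) = absC T * absC x" by (simp add: absC_mult)
  also have "\<dots> < absC x * absC x" using assms absC_T_gt_1 by (intro mult_strict_right_mono) auto
  also have "\<dots> = absC x ^ 2" by (simp add: power2_eq_square)
  also have "\<dots> \<le> absC x ^ q" using assms absC_T_gt_1 q_ge_2 by (intro power_increasing) auto
  finally have "absC (T * x + x ^ q) = absC (x ^ q)" by (simp add: absC_add_eq_right absC_power)
  then show ?thesis by (simp add: carlitz_def absC_power)
qed

text \<open>A preimage under \<open>\<phi>\<close> of a point of size at most |T|^(q^(j+1)) has size at most
  |T|^(q^j); since e (T z) = \<phi> (e z), surjectivity spreads from the disc to the whole field.\<close>

lemma carlitz_exp_surj: "\<exists>z. carlitz_exp z = y"
proof -
  have "\<exists>z. carlitz_exp z = y" if "absC y \<le> absC T ^ (q ^ j)" for j y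
    using that
  proof (induction j arbitrary: y)
    case 0
    then show ?case using carlitz_exp_onto_disc by simp
  next
    case (Suc j)
    obtain x where x: "\<phi> x = y" using carlitz_surj by blast
    have "absC x \<le> absC T ^ (q ^ j)"
    proof (rule ccontr)
      assume "\<not> absC x \<le> absC T ^ (q ^ j)"
      then have big: "absC x > absC T ^ (q ^ j)" by simp
      moreover have "absC T ^ 1 \<le> absC T ^ (q ^ j)" using q_pos by (intro absC_T_power_mono) simp
      ultimately have "absC y = absC x ^ q" using x absC_carlitz_large[of x] by simp
      also have "\<dots> > (absC T ^ (q ^ j)) ^ q"
        using big absC_T_power_pos[of "q ^ j"] q_pos by (intro power_strict_mono) auto
      finally show False using Suc.prems by (simp add: power_mult[symmetric] mult.commute)
    qed
    then obtain z where "carlitz_exp z = x" using Suc.IH by blast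
    then have "carlitz_exp (T * z) = y" using x carlitz_exp_functional_eq by simp
    then show ?case by blast
  qed
  moreover obtain j where "absC y < absC T ^ j" using real_arch_pow[OF absC_T_gt_1] by blast
  moreover have "absC T ^ j \<le> absC T ^ (q ^ j)" by (rule absC_T_power_mono[OF q_power_ge])
  ultimately show ?thesis by (meson less_imp_le order.trans)
qed

subsection \<open>The twisted module and its torsion on the line\<close>

lemma carlitz_kernel_nontrivial: "\<exists>v. v \<noteq> 0 \<and> \<phi> v = 0"
proof -
  define P where "P = monom (1::'c) (q - 1) + [:T:]"
  have "degree P = q - 1" "q - 1 \<ge> 1"
    using q_ge_2 by (simp_all add: P_def degree_add_eq_left degree_monom_eq)
  then obtain v where "poly P v = 0" using alg_closed unfolding alg_closed_field_def by metis
  then have v: "v ^ (q - 1) + T = 0" by (simp add: P_def poly_monom)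
  have "\<phi> v = v * (v ^ (q - 1) + T)"
    using q_pos by (simp add: carlitz_def algebra_simps power_eq_if)
  moreover have "v \<noteq> 0" using v T_nonzero q_ge_2 by (auto simp: power_0_left)
  ultimately show ?thesis using v by auto
qed

text \<open>The v_j = carlitz_tower j are Carlitz torsion points of exact order T^(j+1).\<close>

definition carlitz_tower :: "nat \<Rightarrow> 'c" where
  "carlitz_tower = rec_nat (SOME v. v \<noteq> 0 \<and> \<phi> v = 0) (\<lambda>_ v. SOME x. \<phi> x = v)"

lemma carlitz_tower_0: "carlitz_tower 0 \<noteq> 0" "\<phi> (carlitz_tower 0) = 0"
  using someI_ex[OF carlitz_kernel_nontrivial] by (simp_all add: carlitz_tower_def)

lemma carlitz_tower_Suc: "\<phi> (carlitz_tower (Suc j)) = carlitz_tower j"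
  using someI_ex[OF carlitz_surj[of "carlitz_tower j"]] by (simp add: carlitz_tower_def)

lemma carlitz_iter_tower: "(\<phi> ^^ j) (carlitz_tower j) = carlitz_tower 0"
  by (induction j) (simp_all add: funpow_Suc_right carlitz_tower_Suc del: funpow.simps)

lemma carlitz_iter_tower_eq_0: "(\<phi> ^^ Suc j) (carlitz_tower j) = 0"
  using carlitz_iter_tower[of j] carlitz_tower_0(2) by simp

lemma inj_carlitz_tower: "inj carlitz_tower"
proof -
  have "carlitz_tower i \<noteq> carlitz_tower j" if "i < j" for i j
  proof
    assume "carlitz_tower i = carlitz_tower j"
    then have "(\<phi> ^^ j) (carlitz_tower j) = (\<phi> ^^ (j - Suc i)) ((\<phi> ^^ Suc i) (carlitz_tower i))"
      using that by (metis Suc_leI funpow_add le_add_diff_inverse2 o_apply)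
    then show False
      using carlitz_iter_tower carlitz_iter_tower_eq_0 carlitz_tower_0(1) by simp
  qed
  then show ?thesis by (metis injI linorder_neqE_nat)
qed

lemma infinite_UNIV_field: "infinite (UNIV :: 'c set)"
proof
  assume "finite (UNIV :: 'c set)"
  then have "finite (range carlitz_tower)" by (rule finite_subset[rotated]) simp
  then show False using inj_carlitz_tower finite_imageD by blast
qed

lemma Tmodule_over_jordan_carlitz: "Tmodule_over q T K 2 (jordan_carlitz T)"
proof -
  have "(jordan_carlitz T ! l) i j \<in> K" if "l < 2" for l i j
    using that less_2_cases[OF that]
    by (auto simp: jordan_carlitz_def kfield_0 kfield_1 kfield_T)
  moreover have "nilpotent_mat 2 (\<lambda>i j. (jordan_carlitz T ! 0) i j - (if i = j then T else 0))"
    unfolding nilpotent_mat_def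
    by (rule exI[of _ 2])
      (auto simp: numeral_2_eq_2 mat_mult_def mat_id_def jordan_carlitz_def lessThan_Suc less_Suc_eq)
  ultimately show ?thesis
    unfolding Tmodule_over_def by (auto simp: jordan_carlitz_def intro!: exI[of _ 0])
qed

lemma abelian_jordan_carlitz: "abelian_Tmodule q T 2 (jordan_carlitz T)"
  unfolding abelian_Tmodule_def
  using is_subfield_kfield kfield_subset_kbar Tmodule_over_jordan_carlitz hom_fin_gen_jordan_carlitz
  by blast

definition carlitz_exp2 :: "(nat \<Rightarrow> 'c) \<Rightarrow> nat \<Rightarrow> 'c" where
  "carlitz_exp2 z = (\<lambda>i. if i < 2 then carlitz_exp (z i) else 0)"

lemma carlitz_exp2_in_cvec: "carlitz_exp2 z \<in> cvec 2"
  by (simp add: carlitz_exp2_def cvec_def)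

lemma carlitz_exp2_functional_eq:
  "carlitz_exp2 (mat_vec 2 (jordan_carlitz T ! 0) z) i = \<Phi> (carlitz_exp2 z) i"
proof -
  have mv: "mat_vec 2 (jordan_carlitz T ! 0) z i
      = (if i = 0 then T * z 0 + z 1 else if i = 1 then T * z 1 else 0)"
    by (auto simp: mat_vec_def jordan_carlitz_def numeral_2_eq_2 lessThan_Suc)
  consider "i = 0" | "i = Suc 0" | "i \<ge> 2" by linarith
  then show ?thesis
  proof cases
    case 1
    with mv show ?thesis
      by (simp add: carlitz_exp2_def twist_apply_jordan_carlitz carlitz_exp_add carlitz_exp_functional_eq)
  next
    case 2
    with mv show ?thesis
      by (simp add: carlitz_exp2_def twist_apply_jordan_carlitz carlitz_exp_functional_eq)
  next
    case 3
    with mv show ?thesis by (simp add: carlitz_exp2_def twist_apply_jordan_carlitz)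
  qed
qed

lemma is_exponential_carlitz_exp2: "is_exponential absC q 2 (jordan_carlitz T) carlitz_exp2"
proof -
  define E where "E l i j = (if i = j then carlitz_exp_coeff T q l else 0)" for l i j :: nat
  have sum_E: "(\<Sum>j<2. E l i j * z j ^ (q ^ l)) = carlitz_exp_coeff T q l * z i ^ (q ^ l)"
    if "i < 2" for l i z
    using less_2_cases[OF that] by (auto simp: E_def numeral_2_eq_2 lessThan_Suc)
  show ?thesis
    unfolding is_exponential_def
  proof (intro exI[of _ E] conjI ballI allI impI ext)
    fix z :: "nat \<Rightarrow> 'c" and i :: nat assume "i < 2"
    then show "conv absC (\<lambda>n. \<Sum>l<n. \<Sum>j<2. E l i j * z j ^ (q ^ l)) (carlitz_exp2 z i)"
      using conv_carlitz_exp[of "z i"]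
      by (simp add: sum_E carlitz_exp_partial_def[abs_def] carlitz_exp2_def)
  qed (auto simp: E_def carlitz_exp2_in_cvec carlitz_exp2_functional_eq)
qed

lemma carlitz_exp2_image: "carlitz_exp2 ` cvec 2 = cvec 2"
proof
  show "cvec 2 \<subseteq> carlitz_exp2 ` cvec 2"
  proof
    fix y :: "nat \<Rightarrow> 'c" assume y: "y \<in> cvec 2"
    define z where "z i = (if i < 2 then (SOME w. carlitz_exp w = y i) else 0)" for i
    have "carlitz_exp2 z = y"
      using someI_ex[OF carlitz_exp_surj] y by (auto simp: carlitz_exp2_def z_def cvec_def)
    moreover have "z \<in> cvec 2" by (simp add: z_def cvec_def)
    ultimately show "y \<in> carlitz_exp2 ` cvec 2" by blast
  qed
qed (auto simp: carlitz_exp2_in_cvec)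

lemma uniformizable_jordan_carlitz: "uniformizable absC q 2 (jordan_carlitz T)"
  unfolding uniformizable_def using is_exponential_carlitz_exp2 carlitz_exp2_image by blast

lemma axis_point_tower_torsion: "axis_point (carlitz_tower j) \<in> torsion q 2 (jordan_carlitz T)"
proof -
  let ?N = "Suc (Suc j)" and ?x = "axis_point (carlitz_tower j)" and ?a = "monom (1::'c) (Suc (Suc j))"
  have "(\<Phi> ^^ ?N) ?x i = 0" for i
  proof -
    consider "i = 0" | "i = 1" | "i \<ge> 2" by linarith
    then show ?thesis
    proof cases
      case 1
      then show ?thesis using carlitz_iter_tower_eq_0[of j]
        by (simp add: twist_iter_jordan_carlitz axis_point_def del: funpow.simps)
    next
      case 2
      have "(\<phi> ^^ ?N) (carlitz_tower j) = \<phi> ((\<phi> ^^ Suc j) (carlitz_tower j))" by simp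
      then show ?thesis using carlitz_iter_tower_eq_0[of j] 2
        by (simp add: twist_iter_jordan_carlitz axis_point_def del: funpow.simps)
    next
      case 3
      then show ?thesis by (simp add: twist_apply_jordan_carlitz)
    qed
  qed
  then have "Phi_poly 2 q (jordan_carlitz T) ?a ?x = (\<lambda>_. 0)"
    by (simp add: Phi_poly_def degree_monom_eq coeff_monom if_distrib cong: if_cong del: funpow.simps)
  moreover have "\<forall>k. coeff ?a k \<in> Fq q"
    by (simp add: coeff_monom Fq_0 Fq_1)
  ultimately show ?thesis
    unfolding torsion_def using axis_point_in_axis[of "carlitz_tower j"]
    by (intro CollectI conjI exI[of _ ?a]) (auto simp: axis_def)
qed

lemma infinite_axis_torsion: "infinite (axis \<inter> torsion q 2 (jordan_carlitz T))"
proof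
  assume "finite (axis \<inter> torsion q 2 (jordan_carlitz T))"
  moreover have "range (axis_point \<circ> carlitz_tower) \<subseteq> axis \<inter> torsion q 2 (jordan_carlitz T)"
    using axis_point_in_axis axis_point_tower_torsion by auto
  ultimately have "finite (range (axis_point \<circ> carlitz_tower))" by (rule finite_subset[rotated])
  moreover have "inj (axis_point \<circ> carlitz_tower)"
    using inj_carlitz_tower inj_axis_point by (rule inj_compose[rotated])
  ultimately show False using finite_imageD by blast
qed

lemma no_torsion_set_in_axis: "torsion_set q 2 (jordan_carlitz T) Y \<Longrightarrow> \<not> Y \<subseteq> axis"
proof
  assume "torsion_set q 2 (jordan_carlitz T) Y" and Y_axis: "Y \<subseteq> axis"
  then obtain x B where B: "sub_Tmodule q 2 (jordan_carlitz T) B" and B_nontriv: "B \<noteq> {\<lambda>_. 0}"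
    and Y: "Y = translate x B"
    unfolding torsion_set_def by blast
  have B0: "(\<lambda>_. 0) \<in> B" and B_stable: "\<Phi> ` B \<subseteq> B" and "B \<subseteq> cvec 2"
    using B unfolding sub_Tmodule_def zar_closed_def by auto
  have shifted: "x 0 + b 0 = 0" if "b \<in> B" for b
    using Y_axis that unfolding Y translate_def axis_def by blast
  have "b = (\<lambda>_. 0)" if b: "b \<in> B" for b
  proof -
    have "b 0 = 0" using shifted[OF b] shifted[OF B0] by simp
    moreover have "\<Phi> b 0 = 0" using shifted[of "\<Phi> b"] shifted[OF B0] B_stable b by auto
    ultimately have "b 1 = 0" by (simp add: twist_apply_jordan_carlitz)
    moreover have "b \<in> cvec 2" using \<open>B \<subseteq> cvec 2\<close> b by blast
    ultimately show ?thesis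
    proof (intro ext)
      fix i
      show "b i = 0"
        using \<open>b 0 = 0\<close> \<open>b 1 = 0\<close> \<open>b \<in> cvec 2\<close> less_2_cases[of i]
        by (cases "i < 2") (auto simp: cvec_def)
    qed
  qed
  then show False using B0 B_nontriv by blast
qed

lemma jordan_carlitz_counterexample:
  "\<exists>m as X. abelian_Tmodule q T m as \<and> uniformizable absC q m as \<and>
     subvariety m X \<and> X \<noteq> cvec m \<and> infinite (X \<inter> torsion q m as) \<and>
     (\<forall>Y. torsion_set q m as Y \<longrightarrow> \<not> Y \<subseteq> X)"
  using abelian_jordan_carlitz uniformizable_jordan_carlitz zar_closed_axis
    zar_irreducible_axis[OF infinite_UNIV_field] axis_neq_cvec infinite_axis_torsion no_torsion_set_in_axis
  unfolding subvariety_def by blast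

end

theorem proposition3:
  fixes absC :: "'c::field \<Rightarrow> real" and T :: 'c and p n q :: nat
  assumes "prime p" and "CHAR('c) = p" and "n \<ge> 1" and "q = p ^ n"
    and "C_model absC q T"
  shows "\<exists>m as X. abelian_Tmodule q T m as \<and> uniformizable absC q m as \<and>
           subvariety m X \<and> X \<noteq> cvec m \<and>
           infinite (X \<inter> torsion q m as) \<and>
           (\<forall>Y. torsion_set q m as Y \<longrightarrow> \<not> Y \<subseteq> X)"
proof -
  interpret carlitz_setting absC T p n q
    using assms by unfold_locales
  show ?thesis by (rule jordan_carlitz_counterexample)
qed

end
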